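(* Let $\mathcal{H}$, $A$, $B$, $c$, $d$, $\Omega$, $W_\Omega(T)$ and $W_{\partial\Omega}(T)$ be as in the context. Then (i) $W_\Omega(T)\cap i\mathbb{R}=W_{\partial\Omega}(T)\cap i\mathbb{R}$; (ii) $\partial W_\Omega(T)\setminus i\mathbb{R}=W_{\partial\Omega}(T)\setminus i\mathbb{R}$.
   Context: Let $\mathcal{H}$ be a Hilbert space, $A$ a selfadjoint (possibly unbounded) operator in $\mathcal{H}$ and $B$ a nonzero bounded selfadjoint operator in $\mathcal{H}$. Let $c\ge 0$ and $d>0$ be real numbers, $\theta:=\sqrt{c-d^2/4}$ (principal square root) and $\delta_\pm:=\pm\theta-id/2$, the zeros of $c-id\omega-\omega^2$. For $u\in\operatorname{dom}A\setminus\{0\}$ the numerical ranges are $W(A)=\{(Au,u)/(u,u)\}$, $W(B)=\{(Bu,u)/(u,u)\}\subset\mathbb{R}$. For real $\alpha,\beta$ let $p_{(\alpha,\beta)}(\omega):=(\alpha-\omega^2)(c-id\omega-\omega^2)-\beta\omega^2$, and let $r_1,\dots,r_4:\mathbb{R}^2\to\mathbb{C}$ denote its four roots, labelled so that each $r_n$ is continuous in $(\alpha,\beta)$; they are extended to $\overline{\mathbb{R}}\times\mathbb{R}$, where $\overline{\mathbb{R}}=\mathbb{R}\cup\{\pm\infty\}$, with values in the Riemann sphere $\overline{\mathbb{C}}=\mathbb{C}\cup\{\infty\}$, by taking limits (as $\alpha\to\pm\infty$ the roots tend to $\delta_+,\delta_-$ and to $\infty$ twice). For $X\subset\overline{\mathbb{R}}\times\mathbb{R}$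 put $W_X(T):=\bigcup_{n=1}^4\bigcup_{(\alpha,\beta)\in X}r_n(\alpha,\beta)\subset\overline{\mathbb{C}}$. Let $\Omega:=\overline{W(A)}\times\overline{W(B)}$, where $\overline{W(A)}$ is the closure in $\overline{\mathbb{R}}$ (containing $\pm\infty$ when $W(A)$ is unbounded above/below). $W_\Omega(T)$ is an enclosure of the numerical range of $T(\omega)=A-\omega^2-\frac{\omega^2}{c-id\omega-\omega^2}B$, and $W_{\partial\Omega}(T)=\bigcup_{n}r_n(\partial\Omega)$, where $\partial\Omega$ is the boundary of the rectangle $\Omega$. *)

theory Defs
  imports "HOL-Analysis.Analysis" "HOL-Library.Extended_Real"
begin

text \<open>The extended complex plane (Riemann sphere): Some z is the finite point z, None is infinity.\<close>
type_synonym ecomplex = "complex option"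

definition riemann_sphere :: "ecomplex topology" where
  "riemann_sphere = topology (\<lambda>U. open {z. Some z \<in> U} \<and>
      (None \<in> U \<longrightarrow> (\<exists>R. \<forall>z. R < norm z \<longrightarrow> Some z \<in> U)))"

definition imag_axis :: "ecomplex set" where
  "imag_axis = {Some z | z. Re z = 0}"

definition theta :: "real \<Rightarrow> real \<Rightarrow> complex" where
  "theta c d = csqrt (complex_of_real (c - d\<^sup>2 / 4))"

definition delta_plus :: "real \<Rightarrow> real \<Rightarrow> complex" where
  "delta_plus c d = theta c d - \<i> * complex_of_real (d / 2)"

definition delta_minus :: "real \<Rightarrow> real \<Rightarrow> complex" where
  "delta_minus c d = - theta c d - \<i> * complex_of_real (d / 2)"

definition pT :: "real \<Rightarrow> real \<Rightarrow> real \<Rightarrow> real \<Rightarrow> complex \<Rightarrow> complex" where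
  "pT c d \<alpha> \<beta> \<omega> = (complex_of_real \<alpha> - \<omega>\<^sup>2) *
       (complex_of_real c - \<i> * complex_of_real d * \<omega> - \<omega>\<^sup>2) - complex_of_real \<beta> * \<omega>\<^sup>2"

text \<open>The set {r_1(alpha,beta),...,r_4(alpha,beta)} of roots, extended to alpha = +-infinity
  by the limiting values delta_+, delta_-, infinity.\<close>
definition roots_at :: "real \<Rightarrow> real \<Rightarrow> ereal \<Rightarrow> real \<Rightarrow> ecomplex set" where
  "roots_at c d \<alpha> \<beta> =
     (if \<bar>\<alpha>\<bar> = \<infinity> then {Some (delta_plus c d), Some (delta_minus c d), None}
      else Some ` {\<omega>. pT c d (real_of_ereal \<alpha>) \<beta> \<omega> = 0})"

definition WX :: "real \<Rightarrow> real \<Rightarrow> (ereal \<times> real) set \<Rightarrow> ecomplex set" where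
  "WX c d X = (\<Union>(\<alpha>, \<beta>) \<in> X. roots_at c d \<alpha> \<beta>)"

definition rect_boundary :: "ereal set \<Rightarrow> real set \<Rightarrow> (ereal \<times> real) set" where
  "rect_boundary I J = ({Inf I, Sup I} \<times> J) \<union> (I \<times> {Inf J, Sup J})"

end

theory Submission
  imports Defs "HOL-Complex_Analysis.Complex_Analysis"
begin

text \<open>
  Off the imaginary axis and away from the zeros \<open>\<delta>\<^sub>\<plusminus>\<close> of \<open>q(\<omega>) = c - id\<omega> - \<omega>\<^sup>2\<close>, the
  equation \<open>p\<^sub>(\<^sub>\<alpha>\<^sub>,\<^sub>\<beta>\<^sub>)(\<omega>) = 0\<close> is a real linear system in \<open>(\<alpha>, \<beta>)\<close> with at most one solution, which
  Cramer's rule makes continuous in \<open>\<omega>\<close>: a root coming from an interior parameter is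
  therefore an interior point of \<open>W\<^sub>\<Omega>\<close>.  Conversely, near a root coming from an edge of \<open>\<Omega>\<close>,
  the open mapping theorem for \<open>\<omega> \<mapsto> \<omega>\<^sup>2 + \<beta>\<omega>\<^sup>2/q(\<omega>)\<close> (or \<open>\<omega> \<mapsto> (\<alpha> - \<omega>\<^sup>2) q(\<omega>)/\<omega>\<^sup>2\<close>) moves the
  parameter across that edge, so the root is not interior.  \<open>W\<^sub>\<Omega>\<close> is closed because roots of
  quartics with coefficients in a compact set form a compact set, and near a point with
  \<open>q \<noteq> 0\<close> only bounded \<open>\<alpha>\<close> occur.  On the imaginary axis \<open>p\<^sub>(\<^sub>\<alpha>\<^sub>,\<^sub>\<beta>\<^sub>)(iy)\<close> is real and affine
  in \<open>(\<alpha>, \<beta>)\<close>, so its zero set in \<open>\<Omega>\<close> is a segment that reaches \<open>\<partial>\<Omega>\<close>.  The points \<open>\<delta>\<^sub>\<plusminus>\<close>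
  (approached along the circle where Cramer's determinant vanishes) and \<open>\<infinity>\<close> (approached
  along the diagonal \<open>Re \<omega> = Im \<omega>\<close>, which carries no roots for large \<open>\<omega>\<close>) are treated
  separately.
\<close>

section \<open>The Riemann sphere\<close>

lemma openin_riemann_sphere:
  "openin riemann_sphere U \<longleftrightarrow>
     open {z. Some z \<in> U} \<and> (None \<in> U \<longrightarrow> (\<exists>R. \<forall>z. R < norm z \<longrightarrow> Some z \<in> U))"
proof -
  define P where "P = (\<lambda>U::ecomplex set. open {z. Some z \<in> U} \<and>
      (None \<in> U \<longrightarrow> (\<exists>R. \<forall>z. R < norm z \<longrightarrow> Some z \<in> U)))"
  have "P (S \<inter> T)" if "P S" "P T" for S T
  proof -
    have "open {z. Some z \<in> S \<inter> T}"
      using that unfolding P_def by (simp add: Collect_conj_eq open_Int)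
    moreover have "\<exists>R. \<forall>z. R < norm z \<longrightarrow> Some z \<in> S \<inter> T" if "None \<in> S \<inter> T"
    proof -
      obtain R1 R2 where "\<forall>z. R1 < norm z \<longrightarrow> Some z \<in> S" "\<forall>z. R2 < norm z \<longrightarrow> Some z \<in> T"
        using \<open>P S\<close> \<open>P T\<close> \<open>None \<in> S \<inter> T\<close> unfolding P_def by auto
      then show ?thesis by (intro exI[of _ "max R1 R2"]) auto
    qed
    ultimately show ?thesis unfolding P_def by blast
  qed
  moreover have "P (\<Union>K)" if "\<forall>S\<in>K. P S" for K
  proof -
    have "{z. Some z \<in> \<Union>K} = (\<Union>S\<in>K. {z. Some z \<in> S})" by auto
    then have "open {z. Some z \<in> \<Union>K}" using that unfolding P_def by (auto intro!: open_UN)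
    moreover have "None \<in> \<Union>K \<longrightarrow> (\<exists>R. \<forall>z. R < norm z \<longrightarrow> Some z \<in> \<Union>K)"
      using that unfolding P_def by blast
    ultimately show ?thesis unfolding P_def by blast
  qed
  ultimately have "istopology P" unfolding istopology_def by blast
  then have "openin riemann_sphere = P"
    unfolding riemann_sphere_def P_def by (rule topology_inverse')
  then show ?thesis by (simp add: P_def)
qed

lemma topspace_riemann_sphere [simp]: "topspace riemann_sphere = UNIV"
  unfolding topspace_def using openin_riemann_sphere[of UNIV] by auto

lemma Some_in_interior_of_riemann_sphere_iff:
  "Some z \<in> riemann_sphere interior_of S \<longleftrightarrow> (\<forall>\<^sub>F w in nhds z. Some w \<in> S)"
proof
  assume "Some z \<in> riemann_sphere interior_of S"
  then obtain U where "openin riemann_sphere U" "Some z \<in> U" "U \<subseteq> S"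
    unfolding interior_of_def by auto
  then show "\<forall>\<^sub>F w in nhds z. Some w \<in> S"
    unfolding eventually_nhds openin_riemann_sphere by (intro exI[of _ "{w. Some w \<in> U}"]) auto
next
  assume "\<forall>\<^sub>F w in nhds z. Some w \<in> S"
  then obtain T where T: "open T" "z \<in> T" "\<forall>w\<in>T. Some w \<in> S"
    unfolding eventually_nhds by blast
  have "openin riemann_sphere (Some ` T)"
    using \<open>open T\<close> unfolding openin_riemann_sphere by (simp add: inj_image_mem_iff)
  then show "Some z \<in> riemann_sphere interior_of S"
    using T interior_of_maximal[of "Some ` T" S] by blast
qed

lemma Some_in_closure_of_riemann_sphere:
  assumes "Some z \<in> riemann_sphere closure_of S"
  shows "z \<in> closure {w. Some w \<in> S}"
proof (rule ccontr)
  assume "z \<notin> closure {w. Some w \<in> S}"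
  then have "\<forall>\<^sub>F w in nhds z. Some w \<in> - S"
    using eventually_nhds_in_nhd[of z "- {w. Some w \<in> S}"] by (simp add: closure_interior)
  then have "Some z \<in> riemann_sphere interior_of (- S)"
    by (simp add: Some_in_interior_of_riemann_sphere_iff)
  then show False
    using assms by (simp add: closure_of_interior_of Compl_eq_Diff_UNIV)
qed

lemma None_in_closure_of_riemann_sphere:
  assumes "None \<in> riemann_sphere closure_of S" "None \<notin> S"
  obtains w where "R < norm w" "Some w \<in> S"
proof -
  let ?U = "insert None (Some ` {w::complex. R < norm w})"
  have "{z. Some z \<in> ?U} = {w. R < norm w}" by auto
  moreover have "open {w::complex. R < norm w}" by (intro open_Collect_less continuous_intros)
  ultimately have "openin riemann_sphere ?U" unfolding openin_riemann_sphere by auto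
  then obtain y where "y \<in> S" "y \<in> ?U"
    using assms(1) unfolding in_closure_of by blast
  then show ?thesis using assms(2) that by auto
qed

lemma None_in_interior_of_riemann_sphere:
  assumes "None \<in> riemann_sphere interior_of S"
  obtains R where "\<And>w. R < norm w \<Longrightarrow> Some w \<in> S"
proof -
  obtain U where "openin riemann_sphere U" "None \<in> U" "U \<subseteq> S"
    using assms unfolding interior_of_def by auto
  then show ?thesis using that unfolding openin_riemann_sphere by blast
qed

definition pT_denom :: "real \<Rightarrow> real \<Rightarrow> complex \<Rightarrow> complex" where
  "pT_denom c d w = complex_of_real c - \<i> * complex_of_real d * w - w\<^sup>2"

lemma pT_eq_denom: "pT c d a b w = (of_real a - w\<^sup>2) * pT_denom c d w - of_real b * w\<^sup>2"
  by (simp add: pT_def pT_denom_def)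

lemma pT_denom_eq_0_iff: "pT_denom c d w = 0 \<longleftrightarrow> w = delta_plus c d \<or> w = delta_minus c d"
proof -
  define t where "t = theta c d"
  have t2: "t * t = of_real c - (of_real d)\<^sup>2 / 4"
    unfolding t_def theta_def power2_eq_square[symmetric] by simp
  have "pT_denom c d w = - ((w - delta_plus c d) * (w - delta_minus c d))"
    unfolding delta_plus_def delta_minus_def pT_denom_def t_def[symmetric]
    by (simp add: algebra_simps power2_eq_square t2)
  then show ?thesis by simp
qed

lemma pT_denom_eq_0_off_imag_axis:
  assumes "pT_denom c d w = 0" "Re w \<noteq> 0"
  shows "Im w = - d / 2" "(Re w)\<^sup>2 = c - d\<^sup>2 / 4"
proof -
  have re: "c + d * Im w - (Re w)\<^sup>2 + (Im w)\<^sup>2 = 0" and im: "Re w * (d + 2 * Im w) = 0"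
    using assms(1) unfolding pT_denom_def complex_eq_iff
    by (simp_all add: power2_eq_square algebra_simps)
  show iw: "Im w = - d / 2" using im assms(2) by simp
  show "(Re w)\<^sup>2 = c - d\<^sup>2 / 4" using re unfolding iw by (simp add: power2_eq_square field_simps)
qed

lemma pT_denom_imag_axis: "pT_denom c d (\<i> * of_real y) = of_real (c + d * y + y\<^sup>2)"
  by (simp add: pT_denom_def algebra_simps power2_eq_square)

lemma pT_imag_axis: "pT c d a b (\<i> * of_real y) = of_real ((a + y\<^sup>2) * (c + d * y + y\<^sup>2) + b * y\<^sup>2)"
  by (simp add: pT_def algebra_simps power2_eq_square)

lemma pT_diagonal:
  "Re (pT c d a b (Complex t t)) = a * (d * t + c) - 4 * t^4 - 2 * d * t^3"
  "Im (pT c d a b (Complex t t)) = - a * (2 * t\<^sup>2 + d * t) - 2 * (b + c + d * t) * t\<^sup>2"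
  unfolding pT_def by (simp_all add: power2_eq_square power3_eq_cube power4_eq_xxxx algebra_simps)

lemma pT_diagonal_nonzero:
  assumes "c \<ge> 0" "d > 0" "t > 0" "b + c + d * t > 0"
  shows "pT c d a b (Complex t t) \<noteq> 0"
proof
  assume "pT c d a b (Complex t t) = 0"
  then have re: "a * (d * t + c) = 4 * t^4 + 2 * d * t^3"
    and im: "a * (2 * t\<^sup>2 + d * t) + 2 * (b + c + d * t) * t\<^sup>2 = 0"
    using pT_diagonal[of c d a b t] by simp_all
  have "a > 0"
  proof (rule ccontr)
    assume "\<not> a > 0"
    then have "a * (d * t + c) \<le> 0" using assms by (intro mult_nonpos_nonneg) auto
    moreover have "4 * t^4 + 2 * d * t^3 > 0" using assms by (intro add_pos_pos) auto
    ultimately show False using re by simp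
  qed
  then have "a * (2 * t\<^sup>2 + d * t) > 0" "(b + c + d * t) * t\<^sup>2 > 0"
    using assms by (auto intro!: mult_pos_pos add_pos_pos)
  then show False using im by simp
qed

lemma finite_quartic_zeros: "finite {w. (A - w\<^sup>2) * pT_denom c d w - B * w\<^sup>2 = 0}"
proof -
  let ?P = "[:A * of_real c, - \<i> * A * of_real d, - (A + of_real c + B), \<i> * of_real d, 1:]"
  have "poly ?P w = (A - w\<^sup>2) * pT_denom c d w - B * w\<^sup>2" for w
    unfolding pT_denom_def by (simp add: algebra_simps power2_eq_square power3_eq_cube power4_eq_xxxx)
  then show ?thesis using poly_roots_finite[of ?P] by simp
qed

lemma pT_nonzero_if_norm_large:
  assumes a: "\<bar>a\<bar> \<le> M" and b: "\<bar>b\<bar> \<le> B"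
    and w: "1 + \<bar>d\<bar> + M + \<bar>c\<bar> + B + M * \<bar>d\<bar> + M * \<bar>c\<bar> \<le> norm w"
  shows "pT c d a b w \<noteq> 0"
proof
  assume "pT c d a b w = 0"
  let ?n = "norm w"
  have "0 \<le> M" "0 \<le> B" using a b by auto
  then have "0 \<le> M * \<bar>d\<bar>" "0 \<le> M * \<bar>c\<bar>" by simp_all
  then have n1: "1 \<le> ?n" using w \<open>0 \<le> M\<close> \<open>0 \<le> B\<close> by linarith
  have n: "?n\<^sup>2 \<le> ?n^3" "?n \<le> ?n^3" "1 \<le> ?n^3"
    using power_increasing[of 2 3 ?n] power_increasing[of 1 3 ?n] one_le_power[OF n1] n1 by simp_all
  have "w^4 = - (\<i> * of_real d * w^3 - of_real (a + c + b) * w\<^sup>2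
                 - \<i> * of_real (a * d) * w + of_real (a * c))"
    using \<open>pT c d a b w = 0\<close> unfolding pT_def
    by (simp add: algebra_simps power2_eq_square power3_eq_cube power4_eq_xxxx)
  then have "?n^4 = norm (\<i> * of_real d * w^3 - of_real (a + c + b) * w\<^sup>2
                 - \<i> * of_real (a * d) * w + of_real (a * c))"
    by (metis norm_minus_cancel norm_power)
  also have "\<dots> \<le> \<bar>d\<bar> * ?n^3 + \<bar>a + c + b\<bar> * ?n\<^sup>2 + \<bar>a * d\<bar> * ?n + \<bar>a * c\<bar>"
    by (intro order_trans[OF norm_triangle_ineq] add_mono order_trans[OF norm_triangle_ineq4])
       (simp_all add: norm_mult norm_power del: of_real_add of_real_mult)
  also have "\<dots> \<le> (\<bar>d\<bar> + (M + \<bar>c\<bar> + B) + M * \<bar>d\<bar> + M * \<bar>c\<bar>) * ?n^3"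
  proof -
    have "\<bar>a + c + b\<bar> * ?n\<^sup>2 \<le> (M + \<bar>c\<bar> + B) * ?n^3"
      using a b n n1 by (intro mult_mono) (auto intro: order_trans[OF abs_triangle_ineq])
    moreover have "\<bar>a * d\<bar> * ?n \<le> M * \<bar>d\<bar> * ?n^3"
      using a n n1 by (auto simp: abs_mult intro!: mult_mono)
    moreover have "\<bar>a * c\<bar> \<le> M * \<bar>c\<bar> * ?n^3"
      using mult_right_mono[OF a, of "\<bar>c\<bar>"] mult_left_mono[OF n(3) \<open>0 \<le> M * \<bar>c\<bar>\<close>]
      by (simp add: abs_mult)
    ultimately show ?thesis by (simp add: algebra_simps)
  qed
  also have "\<dots> < ?n * ?n^3"
    using w n n1 by (intro mult_strict_right_mono) auto
  finally show False by (simp add: power_numeral_reduce)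
qed

lemma compact_pT_zeros:
  assumes "compact K"
  shows "compact {w. \<exists>a b. (a, b) \<in> K \<and> pT c d a b w = 0}"
proof -
  obtain M where "\<forall>p\<in>K. norm p \<le> M"
    using compact_imp_bounded[OF assms] unfolding bounded_iff by blast
  then have M: "\<bar>a\<bar> \<le> M" "\<bar>b\<bar> \<le> M" if "(a, b) \<in> K" for a b
    using that norm_fst_le[of a b] norm_snd_le[of b a] by (auto dest!: bspec)
  define R where "R = 1 + \<bar>d\<bar> + M + \<bar>c\<bar> + M + M * \<bar>d\<bar> + M * \<bar>c\<bar>"
  define Z where "Z = (K \<times> cball 0 R) \<inter> {p. pT c d (fst (fst p)) (snd (fst p)) (snd p) = 0}"
  have "compact Z"
    unfolding Z_def pT_def
    by (intro compact_Int_closed compact_Times assms compact_cball closed_Collect_eq continuous_intros)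
  moreover have "{w. \<exists>a b. (a, b) \<in> K \<and> pT c d a b w = 0} = snd ` Z"
  proof (intro equalityI subsetI)
    fix w assume "w \<in> {w. \<exists>a b. (a, b) \<in> K \<and> pT c d a b w = 0}"
    then obtain a b where ab: "(a, b) \<in> K" "pT c d a b w = 0" by blast
    then have "norm w < R"
      using pT_nonzero_if_norm_large[OF M[OF ab(1)]] unfolding R_def by force
    then show "w \<in> snd ` Z" using ab unfolding Z_def by (auto intro: image_eqI[of _ _ "((a, b), w)"])
  qed (force simp: Z_def)
  ultimately show ?thesis
    using compact_continuous_image[OF continuous_on_snd[OF continuous_on_id']] by auto
qed

lemma pT_zero_alpha_bound:
  assumes "pT c d a b w = 0" "0 < m" "m \<le> norm (pT_denom c d w)" "norm w \<le> R" "\<bar>b\<bar> \<le> B"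
  shows "\<bar>a\<bar> \<le> R\<^sup>2 + B * R\<^sup>2 / m"
proof -
  have "norm (of_real a - w\<^sup>2) * norm (pT_denom c d w) = \<bar>b\<bar> * (norm w)\<^sup>2"
    using assms(1) unfolding pT_eq_denom by (metis eq_iff_diff_eq_0 norm_mult norm_of_real norm_power)
  also have "\<dots> \<le> B * R\<^sup>2"
    using assms(4,5) by (intro mult_mono power_mono) auto
  finally have "norm (of_real a - w\<^sup>2) * m \<le> B * R\<^sup>2"
    using assms(3) by (meson mult_left_mono norm_ge_zero order_trans)
  then have "norm (of_real a - w\<^sup>2) \<le> B * R\<^sup>2 / m" using assms(2) by (simp add: field_simps)
  moreover have "norm (w\<^sup>2) \<le> R\<^sup>2" unfolding norm_power using assms(4) by (intro power_mono) auto
  moreover have "\<bar>a\<bar> \<le> norm (w\<^sup>2) + norm (of_real a - w\<^sup>2)"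
    using norm_triangle_ineq[of "w\<^sup>2" "of_real a - w\<^sup>2"] by simp
  ultimately show ?thesis by linarith
qed

section \<open>The parameters of a root\<close>

lemma pT_denom_ne_real_multiple:
  assumes "d \<noteq> 0" "Re w \<noteq> 0" "pT_denom c d w \<noteq> 0" "pT c d a b w = 0"
  shows "pT_denom c d w \<noteq> of_real r * w\<^sup>2"
proof
  assume qr: "pT_denom c d w = of_real r * w\<^sup>2"
  have "w \<noteq> 0" "r \<noteq> 0" using assms(2,3) qr by auto
  from assms(4) have "w\<^sup>2 * ((of_real a - w\<^sup>2) * of_real r - of_real b) = 0"
    unfolding pT_eq_denom qr by (simp add: algebra_simps)
  then have "(of_real a - w\<^sup>2) * of_real r - of_real b = 0"
    using \<open>w \<noteq> 0\<close> by simp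
  then have "w\<^sup>2 * of_real r = of_real (a * r - b)"
    by (simp add: algebra_simps)
  then have "w\<^sup>2 = of_real ((a * r - b) / r)"
    using \<open>r \<noteq> 0\<close> by (simp add: field_simps)
  then have "Re w * Im w = 0" by (auto simp: complex_eq_iff power2_eq_square)
  then have "Im w = 0" using assms(2) by simp
  then have "Im (pT_denom c d w) = - d * Re w" "Im (of_real r * w\<^sup>2) = 0"
    by (simp_all add: pT_denom_def power2_eq_square)
  then show False using assms(1,2) qr by simp
qed

lemma pT_zero_params_unique:
  assumes "d \<noteq> 0" "Re w \<noteq> 0" "pT_denom c d w \<noteq> 0"
    and zero1: "pT c d a1 b1 w = 0" and zero2: "pT c d a2 b2 w = 0"
  shows "a1 = a2 \<and> b1 = b2"
proof (cases "a1 = a2")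
  case True
  then have "of_real (b1 - b2) * w\<^sup>2 = 0"
    using zero1 zero2 unfolding pT_eq_denom by (simp add: algebra_simps)
  then show ?thesis using True assms(2) by auto
next
  case False
  have "of_real (a1 - a2) * pT_denom c d w = of_real (b1 - b2) * w\<^sup>2"
    using zero1 zero2 unfolding pT_eq_denom by (simp add: algebra_simps)
  then have "pT_denom c d w = of_real ((b1 - b2) / (a1 - a2)) * w\<^sup>2"
    using False by (simp add: field_simps)
  then show ?thesis using pT_denom_ne_real_multiple[OF assms(1-3) zero1] by blast
qed

lemma real_combination_cramer:
  fixes u v r :: complex
  assumes "Re u * Im v - Im u * Re v \<noteq> 0"
  shows "of_real ((Re r * Im v - Im r * Re v) / (Re u * Im v - Im u * Re v)) * u
       + of_real ((Re u * Im r - Im u * Re r) / (Re u * Im v - Im u * Re v)) * v = r"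
proof -
  let ?D = "Re u * Im v - Im u * Re v"
  have "(Re r * Im v - Im r * Re v) / ?D * Re u + (Re u * Im r - Im u * Re r) / ?D * Re v = Re r"
    "(Re r * Im v - Im r * Re v) / ?D * Im u + (Re u * Im r - Im u * Re r) / ?D * Im v = Im r"
    using assms by (simp_all add: divide_simps) algebra+
  then show ?thesis unfolding complex_eq_iff by simp
qed

text \<open>By \<open>pT_eq_denom\<close>, \<open>pT c d \<alpha> \<beta> w = 0\<close> is the real linear system
  \<open>\<alpha> q + \<beta> (-w\<^sup>2) = w\<^sup>2 q\<close> in \<open>(\<alpha>, \<beta>)\<close>, where \<open>q = pT_denom c d w\<close>; below are its
  determinant and its solution by Cramer's rule.\<close>

definition pT_det :: "real \<Rightarrow> real \<Rightarrow> complex \<Rightarrow> real" where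
  "pT_det c d w = Re (pT_denom c d w) * Im (- w\<^sup>2) - Im (pT_denom c d w) * Re (- w\<^sup>2)"

definition pT_alpha :: "real \<Rightarrow> real \<Rightarrow> complex \<Rightarrow> real" where
  "pT_alpha c d w = (Re (w\<^sup>2 * pT_denom c d w) * Im (- w\<^sup>2) - Im (w\<^sup>2 * pT_denom c d w) * Re (- w\<^sup>2))
                    / pT_det c d w"

definition pT_beta :: "real \<Rightarrow> real \<Rightarrow> complex \<Rightarrow> real" where
  "pT_beta c d w = (Re (pT_denom c d w) * Im (w\<^sup>2 * pT_denom c d w) - Im (pT_denom c d w) * Re (w\<^sup>2 * pT_denom c d w))
                   / pT_det c d w"

lemma pT_alpha_beta_zero:
  assumes "pT_det c d w \<noteq> 0"
  shows "pT c d (pT_alpha c d w) (pT_beta c d w) w = 0"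
proof -
  have "of_real (pT_alpha c d w) * pT_denom c d w + of_real (pT_beta c d w) * (- w\<^sup>2)
      = w\<^sup>2 * pT_denom c d w"
    using real_combination_cramer[where r = "w\<^sup>2 * pT_denom c d w", OF assms[unfolded pT_det_def]]
    unfolding pT_alpha_def pT_beta_def pT_det_def .
  moreover have "pT c d (pT_alpha c d w) (pT_beta c d w) w
      = of_real (pT_alpha c d w) * pT_denom c d w + of_real (pT_beta c d w) * (- w\<^sup>2)
        - w\<^sup>2 * pT_denom c d w"
    unfolding pT_eq_denom by (simp add: algebra_simps)
  ultimately show ?thesis by simp
qed

lemma pT_det_nonzero:
  assumes "d \<noteq> 0" "Re w \<noteq> 0" "pT_denom c d w \<noteq> 0" "pT c d a b w = 0"
  shows "pT_det c d w \<noteq> 0"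
proof
  assume det: "pT_det c d w = 0"
  define v where "v = w\<^sup>2"
  define s where "s = Re (pT_denom c d w) * Re v + Im (pT_denom c d w) * Im v"
  have "v \<noteq> 0" using assms(2) unfolding v_def by auto
  have "Re (pT_denom c d w) * Im v = Im (pT_denom c d w) * Re v"
    using det unfolding pT_det_def v_def by simp
  then have "pT_denom c d w * cnj v = of_real s"
    unfolding complex_eq_iff s_def by (simp add: algebra_simps)
  then have "pT_denom c d w * of_real ((cmod v)\<^sup>2) = of_real s * v"
    by (metis complex_norm_square mult.assoc mult.commute)
  then have "pT_denom c d w = of_real (s / (cmod v)\<^sup>2) * v"
    using \<open>v \<noteq> 0\<close> by (simp add: field_simps)
  then show False using pT_denom_ne_real_multiple[OF assms] unfolding v_def by blast
qed

lemma pT_det_eq: "pT_det c d w = - Re w * (2 * c * Im w + d * ((Re w)\<^sup>2 + (Im w)\<^sup>2))"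
  unfolding pT_det_def pT_denom_def by (simp add: power2_eq_square algebra_simps)

lemma isCont_pT_denom: "isCont (pT_denom c d) w"
  unfolding pT_denom_def by (intro continuous_intros)

lemma isCont_pT_det: "isCont (pT_det c d) w"
  unfolding pT_det_def pT_denom_def by (intro continuous_intros continuous_Re continuous_Im)

lemma isCont_pT_alpha: "pT_det c d w \<noteq> 0 \<Longrightarrow> isCont (pT_alpha c d) w"
  unfolding pT_alpha_def using isCont_pT_det[where c=c and d=d and w=w]
  by (intro continuous_intros continuous_Re continuous_Im) (auto simp: pT_denom_def)

lemma isCont_pT_beta: "pT_det c d w \<noteq> 0 \<Longrightarrow> isCont (pT_beta c d) w"
  unfolding pT_beta_def using isCont_pT_det[where c=c and d=d and w=w]
  by (intro continuous_intros continuous_Re continuous_Im) (auto simp: pT_denom_def)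

lemma pT_denom_bounded_below_near:
  assumes "pT_denom c d z \<noteq> 0"
  obtains U m R where "open U" "z \<in> U" "0 < m" "\<And>w. w \<in> U \<Longrightarrow> m < norm (pT_denom c d w) \<and> norm w < R"
proof -
  define m where "m = norm (pT_denom c d z) / 2"
  have "0 < m" using assms unfolding m_def by simp
  have "((\<lambda>w. norm (pT_denom c d w)) \<longlongrightarrow> norm (pT_denom c d z)) (nhds z)"
    using isCont_pT_denom[where c=c and d=d and w=z]
    by (intro tendsto_norm) (simp add: isCont_def tendsto_at_iff_tendsto_nhds)
  then have "\<forall>\<^sub>F w in nhds z. m < norm (pT_denom c d w)"
    by (rule order_tendstoD(1)) (use \<open>0 < m\<close> in \<open>simp add: m_def\<close>)
  moreover have "\<forall>\<^sub>F w in nhds z. norm w < norm z + 1"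
    by (rule order_tendstoD(2)[OF tendsto_norm[OF filterlim_ident]]) simp
  ultimately have "\<forall>\<^sub>F w in nhds z. m < norm (pT_denom c d w) \<and> norm w < norm z + 1"
    by (rule eventually_conj)
  then obtain U where "open U" "z \<in> U" "\<forall>w\<in>U. m < norm (pT_denom c d w) \<and> norm w < norm z + 1"
    unfolding eventually_nhds by blast
  then show ?thesis using that[of U m "norm z + 1"] \<open>0 < m\<close> by blast
qed

section \<open>Moving the parameters of a root\<close>

lemma not_constant_on_ball:
  fixes f :: "complex \<Rightarrow> 'a"
  assumes "r > 0" and "\<And>k. finite {w. P k w}" and "\<And>k w. w \<in> ball z r \<Longrightarrow> f w = k \<Longrightarrow> P k w"
  shows "\<not> f constant_on ball z r"
proof
  assume "f constant_on ball z r"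
  then obtain k where "\<forall>w\<in>ball z r. f w = k" unfolding constant_on_def by blast
  then have "ball z r \<subseteq> {w. P k w}" using assms(3) by blast
  then have "finite (ball z r)" using assms(2) finite_subset by blast
  then show False using finite_imp_not_open[of "ball z r"] assms(1) by auto
qed

lemma holomorphic_real_value_perturb:
  fixes f :: "complex \<Rightarrow> complex"
  assumes "f holomorphic_on ball z r" "r > 0" "\<not> f constant_on ball z r" "f z = of_real t0"
  shows "\<exists>w\<in>ball z r. \<exists>t>t0. f w = of_real t" "\<exists>w\<in>ball z r. \<exists>t<t0. f w = of_real t"
proof -
  have "open (f ` ball z r)"
    using open_mapping_thm[OF assms(1) open_ball connected_ball open_ball order_refl assms(3)] .
  moreover have "of_real t0 \<in> f ` ball z r" using assms(2,4) by (metis centre_in_ball imageI)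
  ultimately obtain e where e: "e > 0" "ball (of_real t0) e \<subseteq> f ` ball z r"
    using open_contains_ball_eq by metis
  have "of_real (t0 + e/2) \<in> ball (of_real t0 :: complex) e"
       "of_real (t0 - e/2) \<in> ball (of_real t0 :: complex) e"
    using e(1) by (simp_all add: dist_norm flip: of_real_diff)
  then have "of_real (t0 + e/2) \<in> f ` ball z r" "of_real (t0 - e/2) \<in> f ` ball z r"
    using e(2) by blast+
  then show "\<exists>w\<in>ball z r. \<exists>t>t0. f w = of_real t" "\<exists>w\<in>ball z r. \<exists>t<t0. f w = of_real t"
    using e(1) by (force intro!: exI[of _ "t0 + e/2"], force intro!: exI[of _ "t0 - e/2"])
qed

text \<open>On a disc avoiding the zeros of the denominator, the roots of \<open>pT c d \<alpha> \<beta>\<close> are the level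
  set \<open>F = \<alpha>\<close> of the holomorphic function \<open>F w = w\<^sup>2 + \<beta> w\<^sup>2 / pT_denom c d w\<close>; if also
  \<open>0\<close> is avoided, they are the level set \<open>G = \<beta>\<close> of \<open>G w = (\<alpha> - w\<^sup>2) pT_denom c d w / w\<^sup>2\<close>.
  Open mapping lets either parameter be moved in both directions.\<close>

lemma pT_zero_perturb_alpha:
  assumes denom: "\<And>w. w \<in> ball z r \<Longrightarrow> pT_denom c d w \<noteq> 0" and "r > 0" and "pT c d a b z = 0"
  shows "\<exists>w\<in>ball z r. \<exists>t>a. pT c d t b w = 0" "\<exists>w\<in>ball z r. \<exists>t<a. pT c d t b w = 0"
proof -
  define F where "F w = w\<^sup>2 + of_real b * w\<^sup>2 / pT_denom c d w" for w
  have level: "pT c d t b w = 0 \<longleftrightarrow> F w = of_real t" if "w \<in> ball z r" for w t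
    using denom[OF that] unfolding F_def pT_eq_denom by (auto simp: field_simps)
  have "F holomorphic_on ball z r"
    unfolding F_def using denom unfolding pT_denom_def by (intro holomorphic_intros) auto
  moreover have "\<not> F constant_on ball z r"
  proof (rule not_constant_on_ball[where P = "\<lambda>k w. (k - w\<^sup>2) * pT_denom c d w - of_real b * w\<^sup>2 = 0"])
    show "(k - w\<^sup>2) * pT_denom c d w - of_real b * w\<^sup>2 = 0" if "w \<in> ball z r" "F w = k" for k w
      using that denom[OF that(1)] unfolding F_def by (auto simp: field_simps)
  qed (use \<open>r > 0\<close> finite_quartic_zeros in auto)
  moreover have "F z = of_real a" using level[of z a] assms(2,3) by simp
  ultimately show "\<exists>w\<in>ball z r. \<exists>t>a. pT c d t b w = 0" "\<exists>w\<in>ball z r. \<exists>t<a. pT c d t b w = 0"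
    using holomorphic_real_value_perturb[OF _ \<open>r > 0\<close>] level by blast+
qed

lemma pT_zero_perturb_beta:
  assumes nz: "\<And>w. w \<in> ball z r \<Longrightarrow> pT_denom c d w \<noteq> 0 \<and> w \<noteq> 0" and "r > 0" and "pT c d a b z = 0"
  shows "\<exists>w\<in>ball z r. \<exists>t>b. pT c d a t w = 0" "\<exists>w\<in>ball z r. \<exists>t<b. pT c d a t w = 0"
proof -
  define G where "G w = (of_real a - w\<^sup>2) * pT_denom c d w / w\<^sup>2" for w
  have level: "pT c d a t w = 0 \<longleftrightarrow> G w = of_real t" if "w \<in> ball z r" for w t
    using nz[OF that] unfolding G_def pT_eq_denom by (auto simp: field_simps)
  have "G holomorphic_on ball z r"
    unfolding G_def using nz unfolding pT_denom_def by (intro holomorphic_intros) auto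
  moreover have "\<not> G constant_on ball z r"
  proof (rule not_constant_on_ball[where P = "\<lambda>k w. (of_real a - w\<^sup>2) * pT_denom c d w - k * w\<^sup>2 = 0"])
    show "(of_real a - w\<^sup>2) * pT_denom c d w - k * w\<^sup>2 = 0" if "w \<in> ball z r" "G w = k" for k w
      using that nz[OF that(1)] unfolding G_def by (auto simp: field_simps)
  qed (use \<open>r > 0\<close> finite_quartic_zeros in auto)
  moreover have "G z = of_real b" using level[of z b] assms(2,3) by simp
  ultimately show "\<exists>w\<in>ball z r. \<exists>t>b. pT c d a t w = 0" "\<exists>w\<in>ball z r. \<exists>t<b. pT c d a t w = 0"
    using holomorphic_real_value_perturb[OF _ \<open>r > 0\<close>] level by blast+
qed

lemma Some_in_WX_iff:
  "Some w \<in> WX c d X \<longleftrightarrow>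
     (\<exists>a b. (ereal a, b) \<in> X \<and> pT c d a b w = 0) \<or>
     ((w = delta_plus c d \<or> w = delta_minus c d) \<and> (\<exists>\<alpha> b. (\<alpha>, b) \<in> X \<and> (\<alpha> = \<infinity> \<or> \<alpha> = -\<infinity>)))"
  (is "_ \<longleftrightarrow> ?rhs")
proof
  have roots: "Some w \<in> roots_at c d \<alpha> b \<longleftrightarrow>
     (if \<alpha> = \<infinity> \<or> \<alpha> = -\<infinity> then w = delta_plus c d \<or> w = delta_minus c d
      else pT c d (real_of_ereal \<alpha>) b w = 0)" for \<alpha> b
    by (cases \<alpha>) (simp_all add: roots_at_def image_iff)
  show "Some w \<in> WX c d X \<Longrightarrow> ?rhs"
  proof -
    assume "Some w \<in> WX c d X"
    then obtain \<alpha> b where "(\<alpha>, b) \<in> X" "Some w \<in> roots_at c d \<alpha> b" unfolding WX_def by blast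
    then show ?rhs using roots[of \<alpha> b] by (cases \<alpha>) auto
  qed
  show "?rhs \<Longrightarrow> Some w \<in> WX c d X"
    unfolding WX_def using roots by (elim disjE exE conjE) force+
qed

lemma None_in_WX_iff: "None \<in> WX c d X \<longleftrightarrow> (\<exists>\<alpha> b. (\<alpha>, b) \<in> X \<and> (\<alpha> = \<infinity> \<or> \<alpha> = -\<infinity>))"
proof -
  have "None \<in> roots_at c d \<alpha> b \<longleftrightarrow> \<alpha> = \<infinity> \<or> \<alpha> = -\<infinity>" for \<alpha> b
    by (cases \<alpha>) (auto simp: roots_at_def)
  then show ?thesis unfolding WX_def by blast
qed

lemma WX_mono: "X \<subseteq> Y \<Longrightarrow> WX c d X \<subseteq> WX c d Y"
  unfolding WX_def by blast

lemma pT_det_zero_not_in_WX: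
  assumes "d \<noteq> 0" "Re w \<noteq> 0" "pT_denom c d w \<noteq> 0" "pT_det c d w = 0"
  shows "Some w \<notin> WX c d X"
proof
  assume "Some w \<in> WX c d X"
  then obtain a b where "pT c d a b w = 0"
    using assms(3) unfolding Some_in_WX_iff pT_denom_eq_0_iff by blast
  then show False using pT_det_nonzero[OF assms(1-3)] assms(4) by blast
qed

lemma pT_zero_params_outside_not_in_WX:
  assumes "d \<noteq> 0" "Re w \<noteq> 0" "pT_denom c d w \<noteq> 0" "pT c d a b w = 0" "(ereal a, b) \<notin> X"
  shows "Some w \<notin> WX c d X"
proof
  assume "Some w \<in> WX c d X"
  then obtain a' b' where "(ereal a', b') \<in> X" "pT c d a' b' w = 0"
    using assms(3) unfolding Some_in_WX_iff pT_denom_eq_0_iff by blast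
  then show False using pT_zero_params_unique[OF assms(1-4)] assms(5) by blast
qed

lemma closure_bounded_interval:
  fixes S :: "real set"
  assumes "is_interval S" "bounded S" "S \<noteq> {}"
  shows "closure S = {Inf S..Sup S}"
proof
  have bb: "bdd_below S" "bdd_above S"
    using assms(2) by (auto simp: bounded_imp_bdd_below bounded_imp_bdd_above)
  have "S \<subseteq> {Inf S..Sup S}" using bb by (auto intro: cInf_lower cSup_upper)
  then show "closure S \<subseteq> {Inf S..Sup S}" by (rule closure_minimal) simp
  show "{Inf S..Sup S} \<subseteq> closure S"
  proof
    fix x assume x: "x \<in> {Inf S..Sup S}"
    show "x \<in> closure S"
    proof (cases "x = Inf S \<or> x = Sup S")
      case True
      then show ?thesis using closure_contains_Inf[OF assms(3) bb(1)]
          closure_contains_Sup[OF assms(3) bb(2)] by auto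
    next
      case False
      then have "Inf S < x" "x < Sup S" using x by auto
      obtain u v where "u \<in> S" "u < x" "v \<in> S" "x < v"
        using cInf_lessD[OF assms(3) \<open>Inf S < x\<close>] less_cSupD[OF assms(3) \<open>x < Sup S\<close>] by blast
      then have "x \<in> S" by (intro mem_is_interval_1_I[OF assms(1) \<open>u \<in> S\<close> \<open>v \<in> S\<close>]) simp_all
      then show ?thesis using closure_subset by blast
    qed
  qed
qed

lemma closure_order_convex:
  fixes S :: "'a::{complete_linorder, linorder_topology, second_countable_topology} set"
  assumes "S \<noteq> {}" and convex: "\<And>x y z. x \<in> S \<Longrightarrow> z \<in> S \<Longrightarrow> x \<le> y \<Longrightarrow> y \<le> z \<Longrightarrow> y \<in> S"
  shows "closure S = {Inf S..Sup S}"
proof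
  have "S \<subseteq> {Inf S..Sup S}"
    by (intro subsetI atLeastAtMost_iff[THEN iffD2] conjI Inf_lower Sup_upper)
  then show cl_sub: "closure S \<subseteq> {Inf S..Sup S}" by (rule closure_minimal) simp
  have ne: "closure S \<noteq> {}" using assms(1) closure_subset by blast
  have "Inf (closure S) = Inf S"
  proof (rule order.antisym)
    show "Inf (closure S) \<le> Inf S" by (rule Inf_superset_mono[OF closure_subset])
    show "Inf S \<le> Inf (closure S)"
      by (rule Inf_greatest) (use cl_sub in auto)
  qed
  then have inf: "Inf S \<in> closure S" using closed_contains_Inf_cl[OF closed_closure ne] by simp
  have "Sup (closure S) = Sup S"
  proof (rule order.antisym)
    show "Sup S \<le> Sup (closure S)" by (rule Sup_subset_mono[OF closure_subset])
    show "Sup (closure S) \<le> Sup S"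
      by (rule Sup_least) (use cl_sub in auto)
  qed
  then have sup: "Sup S \<in> closure S" using closed_contains_Sup_cl[OF closed_closure ne] by simp
  show "{Inf S..Sup S} \<subseteq> closure S"
  proof
    fix x assume x: "x \<in> {Inf S..Sup S}"
    show "x \<in> closure S"
    proof (cases "x = Inf S \<or> x = Sup S")
      case False
      then have "Inf S < x" "x < Sup S" using x by (auto simp: order.order_iff_strict)
      then obtain y z where "y \<in> S" "y < x" "z \<in> S" "x < z"
        unfolding Inf_less_iff less_Sup_iff by blast
      then have "x \<in> S" using convex[of y z x] by (simp add: less_imp_le)
      then show ?thesis using closure_subset by blast
    qed (use inf sup in auto)
  qed
qed

lemma ereal_image_interval_order_convex:
  assumes "is_interval WA" "x \<in> ereal ` WA" "z \<in> ereal ` WA" "x \<le> y" "y \<le> z"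
  shows "y \<in> ereal ` WA"
proof -
  obtain u v where uv: "u \<in> WA" "x = ereal u" "v \<in> WA" "z = ereal v" using assms(2,3) by blast
  then obtain r where r: "y = ereal r" using assms(4,5) by (cases y) simp_all
  have "u \<le> r" "r \<le> v" using assms(4,5) unfolding r uv by simp_all
  then have "r \<in> WA" by (rule mem_is_interval_1_I[OF assms(1) uv(1) uv(3)])
  then show ?thesis unfolding r by blast
qed

section \<open>Roots over a rectangle of parameters\<close>

locale pT_rectangle =
  fixes c d :: real and ia ib :: ereal and b1 b2 :: real
  assumes c_nonneg: "c \<ge> 0" and d_pos: "d > 0" and ia_le_ib: "ia \<le> ib"
    and ia_ne_PInf: "ia \<noteq> \<infinity>" and ib_ne_MInf: "ib \<noteq> -\<infinity>" and b1_le_b2: "b1 \<le> b2"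
begin

abbreviation "\<Omega> \<equiv> {ia..ib} \<times> {b1..b2}"
abbreviation "\<Omega>_bd \<equiv> rect_boundary {ia..ib} {b1..b2}"

lemma rect_boundary_eq: "\<Omega>_bd = ({ia, ib} \<times> {b1..b2}) \<union> ({ia..ib} \<times> {b1, b2})"
  unfolding rect_boundary_def using ia_le_ib b1_le_b2 by simp

lemma rect_boundary_subset: "\<Omega>_bd \<subseteq> \<Omega>"
  unfolding rect_boundary_eq using ia_le_ib b1_le_b2 by auto

lemma infinite_alpha_in_rect_boundary:
  assumes "(\<alpha>, b) \<in> \<Omega>" "\<alpha> = \<infinity> \<or> \<alpha> = -\<infinity>"
  shows "(\<alpha>, b) \<in> \<Omega>_bd" "ia = -\<infinity> \<or> ib = \<infinity>"
proof -
  have "\<alpha> = ia \<or> \<alpha> = ib" using assms by (auto simp: ereal_infty_less_eq)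
  then show "(\<alpha>, b) \<in> \<Omega>_bd" "ia = -\<infinity> \<or> ib = \<infinity>"
    using assms unfolding rect_boundary_eq by auto
qed

lemma continuous_graph_meets_rect_boundary:
  assumes f: "continuous_on {b..b2} f" and start: "(ereal (f b), b) \<in> \<Omega>"
  obtains t where "(ereal (f t), t) \<in> \<Omega>_bd"
proof -
  have b: "b1 \<le> b" "b \<le> b2" and a: "ia \<le> ereal (f b)" "ereal (f b) \<le> ib" using start by auto
  consider "ia \<le> ereal (f b2) \<and> ereal (f b2) \<le> ib" | "ib < ereal (f b2)" | "ereal (f b2) < ia"
    by force
  then show ?thesis
  proof cases
    case 1
    then have "(ereal (f b2), b2) \<in> \<Omega>_bd" unfolding rect_boundary_eq using b1_le_b2 by auto
    then show ?thesis by (rule that)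
  next
    case 2
    then obtain r where r: "ib = ereal r" using ib_ne_MInf by (cases ib) auto
    obtain t where "b \<le> t" "t \<le> b2" "f t = r"
      using IVT'[of f b r b2] f 2 a b unfolding r by auto
    then have "(ereal (f t), t) \<in> {ia, ib} \<times> {b1..b2}" using r b by auto
    then show ?thesis using that unfolding rect_boundary_eq by blast
  next
    case 3
    then obtain r where r: "ia = ereal r" using ia_ne_PInf by (cases ia) auto
    obtain t where "b \<le> t" "t \<le> b2" "f t = r"
      using IVT2'[of f b2 r b] f 3 a b unfolding r by auto
    then have "(ereal (f t), t) \<in> {ia, ib} \<times> {b1..b2}" using r b by auto
    then show ?thesis using that unfolding rect_boundary_eq by blast
  qed
qed

lemma denom_zero_root_in_rect_boundary:
  assumes denom: "pT_denom c d w = 0" and ab: "(ereal a, b) \<in> \<Omega>" and zero: "pT c d a b w = 0"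
  shows "Some w \<in> WX c d \<Omega>_bd"
proof -
  have zero': "pT c d a' b w = 0" for a' using denom zero unfolding pT_eq_denom by simp
  have edge: "(ib, b) \<in> \<Omega>_bd" using ab ia_le_ib unfolding rect_boundary_eq by auto
  show ?thesis
  proof (cases ib)
    case (real r)
    then show ?thesis unfolding Some_in_WX_iff using edge zero' by blast
  next
    case PInf
    then show ?thesis unfolding Some_in_WX_iff using edge denom[unfolded pT_denom_eq_0_iff] by blast
  qed (use ib_ne_MInf in simp)
qed

lemma imag_axis_root_in_rect_boundary:
  assumes W: "Some w \<in> WX c d \<Omega>" and re: "Re w = 0"
  shows "Some w \<in> WX c d \<Omega>_bd"
proof -
  define y where "y = Im w"
  define Q where "Q = c + d * y + y\<^sup>2"
  have w: "w = \<i> * of_real y" using re unfolding y_def complex_eq_iff by simp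
  have zero_iff: "pT c d a b w = 0 \<longleftrightarrow> (a + y\<^sup>2) * Q + b * y\<^sup>2 = 0" for a b
    unfolding w pT_imag_axis Q_def of_real_eq_0_iff ..
  from W[unfolded Some_in_WX_iff] consider
      (infinite) "(w = delta_plus c d \<or> w = delta_minus c d) \<and> (\<exists>\<alpha> b. (\<alpha>, b) \<in> \<Omega> \<and> (\<alpha> = \<infinity> \<or> \<alpha> = -\<infinity>))"
    | (finite) a b where "(ereal a, b) \<in> \<Omega>" "pT c d a b w = 0"
    by blast
  then show ?thesis
  proof cases
    case infinite
    then show ?thesis unfolding Some_in_WX_iff using infinite_alpha_in_rect_boundary by blast
  next
    case (finite a b)
    show ?thesis
    proof (cases "Q = 0")
      case True
      then have "pT_denom c d w = 0" unfolding w pT_denom_imag_axis Q_def by simp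
      then show ?thesis using denom_zero_root_in_rect_boundary finite by blast
    next
      case False
      define f where "f t = - y\<^sup>2 - t * y\<^sup>2 / Q" for t
      have zero_f: "pT c d (f t) t w = 0" for t
        unfolding zero_iff f_def using False by (simp add: field_simps)
      have "f b = a" using finite(2) False unfolding zero_iff f_def by (simp add: field_simps)
      moreover have "continuous_on {b..b2} f" unfolding f_def using False by (intro continuous_intros) auto
      ultimately obtain t where "(ereal (f t), t) \<in> \<Omega>_bd"
        using continuous_graph_meets_rect_boundary finite(1) by metis
      then show ?thesis unfolding Some_in_WX_iff using zero_f by blast
    qed
  qed
qed

lemma None_in_frontier_imp_rect_boundary:
  assumes "None \<in> riemann_sphere frontier_of (WX c d \<Omega>)"
  shows "None \<in> WX c d \<Omega>_bd"
proof (cases "ia = -\<infinity> \<or> ib = \<infinity>")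
  case True
  have "(ia, b1) \<in> \<Omega>_bd" "(ib, b1) \<in> \<Omega>_bd" unfolding rect_boundary_eq using ia_le_ib b1_le_b2 by auto
  then show ?thesis unfolding None_in_WX_iff using True by blast
next
  case False
  then obtain r1 r2 where r: "ia = ereal r1" "ib = ereal r2" using ia_ne_PInf ib_ne_MInf
    by (cases ia; cases ib) auto
  define M where "M = \<bar>r1\<bar> + \<bar>r2\<bar>"
  define B where "B = \<bar>b1\<bar> + \<bar>b2\<bar>"
  have "None \<notin> WX c d \<Omega>"
    unfolding None_in_WX_iff using infinite_alpha_in_rect_boundary(2) False by blast
  moreover have "None \<in> riemann_sphere closure_of WX c d \<Omega>"
    using assms unfolding frontier_of_def by blast
  ultimately obtain w where w: "1 + \<bar>d\<bar> + M + \<bar>c\<bar> + B + M * \<bar>d\<bar> + M * \<bar>c\<bar> < norm w" "Some w \<in> WX c d \<Omega>"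
    using None_in_closure_of_riemann_sphere by metis
  then obtain a b where ab: "(ereal a, b) \<in> \<Omega>" "pT c d a b w = 0"
    unfolding Some_in_WX_iff using infinite_alpha_in_rect_boundary(2) False by blast
  have "\<bar>a\<bar> \<le> M" "\<bar>b\<bar> \<le> B" using ab(1) r unfolding M_def B_def by auto
  then have "pT c d a b w \<noteq> 0" using w(1) by (intro pT_nonzero_if_norm_large) auto
  then show ?thesis using ab(2) by contradiction
qed

lemma closed_finite_part_WX_if_alpha_bounded:
  assumes "ia = ereal r1" "ib = ereal r2"
  shows "closed {w. Some w \<in> WX c d \<Omega>}"
proof -
  have "{w. Some w \<in> WX c d \<Omega>} = {w. \<exists>a b. (a, b) \<in> {r1..r2} \<times> {b1..b2} \<and> pT c d a b w = 0}"
    unfolding Some_in_WX_iff using assms by auto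
  then show ?thesis
    by (simp only:) (intro compact_imp_closed compact_pT_zeros compact_Times compact_Icc)
qed

lemma Some_in_WX_if_in_closure_denom_nonzero:
  assumes z: "z \<in> closure {w. Some w \<in> WX c d \<Omega>}" and denom: "pT_denom c d z \<noteq> 0"
  shows "Some z \<in> WX c d \<Omega>"
proof -
  obtain U m R where "open U" "z \<in> U" "0 < m"
    and near: "\<And>w. w \<in> U \<Longrightarrow> m < norm (pT_denom c d w) \<and> norm w < R"
    using pT_denom_bounded_below_near[OF denom] by blast
  define M where "M = R\<^sup>2 + (\<bar>b1\<bar> + \<bar>b2\<bar>) * R\<^sup>2 / m"
  define lo where "lo = (case ia of ereal x \<Rightarrow> x | _ \<Rightarrow> - M)"
  define hi where "hi = (case ib of ereal x \<Rightarrow> x | _ \<Rightarrow> M)"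
  define Z where "Z = {w. \<exists>a b. (a, b) \<in> {lo..hi} \<times> {b1..b2} \<and> pT c d a b w = 0}"
  have "{w. Some w \<in> WX c d \<Omega>} \<inter> U \<subseteq> Z"
  proof
    fix w assume w: "w \<in> {w. Some w \<in> WX c d \<Omega>} \<inter> U"
    then have "pT_denom c d w \<noteq> 0" using near \<open>0 < m\<close> by force
    then obtain a b where ab: "(ereal a, b) \<in> \<Omega>" "pT c d a b w = 0"
      using w unfolding Some_in_WX_iff pT_denom_eq_0_iff by blast
    have "m < norm (pT_denom c d w)" "norm w < R" using near w by auto
    then have "\<bar>a\<bar> \<le> M"
      unfolding M_def using ab \<open>0 < m\<close> by (intro pT_zero_alpha_bound) auto
    then have "lo \<le> a \<and> a \<le> hi"
      using ab(1) ia_ne_PInf ib_ne_MInf unfolding lo_def hi_def by (cases ia; cases ib) auto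
    then show "w \<in> Z" unfolding Z_def using ab by auto
  qed
  moreover have "Z \<subseteq> {w. Some w \<in> WX c d \<Omega>}"
  proof -
    have "(ereal a, b) \<in> \<Omega>" if "(a, b) \<in> {lo..hi} \<times> {b1..b2}" for a b
      using that ia_ne_PInf ib_ne_MInf unfolding lo_def hi_def by (cases ia; cases ib) auto
    then show ?thesis unfolding Z_def Some_in_WX_iff by blast
  qed
  moreover have "closed Z"
    unfolding Z_def by (intro compact_imp_closed compact_pT_zeros compact_Times compact_Icc)
  moreover have "z \<in> closure ({w. Some w \<in> WX c d \<Omega>} \<inter> U)"
    using open_Int_closure_subset[OF \<open>open U\<close>, of "{w. Some w \<in> WX c d \<Omega>}"] z \<open>z \<in> U\<close> by (auto simp: Int_commute)
  ultimately show ?thesis using closure_minimal[of _ Z] by blast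
qed

lemma Some_in_WX_if_in_closure_of:
  assumes "Some z \<in> riemann_sphere closure_of (WX c d \<Omega>)"
  shows "Some z \<in> WX c d \<Omega>"
proof -
  have z: "z \<in> closure {w. Some w \<in> WX c d \<Omega>}" by (rule Some_in_closure_of_riemann_sphere[OF assms])
  consider "pT_denom c d z \<noteq> 0" | "pT_denom c d z = 0" "ia = -\<infinity> \<or> ib = \<infinity>"
    | r1 r2 where "ia = ereal r1" "ib = ereal r2"
    using ia_ne_PInf ib_ne_MInf by (cases ia; cases ib) auto
  then show ?thesis
  proof cases
    case 1
    then show ?thesis using Some_in_WX_if_in_closure_denom_nonzero[OF z] by blast
  next
    case 2
    have "(ia, b1) \<in> \<Omega>" "(ib, b1) \<in> \<Omega>" using ia_le_ib b1_le_b2 by auto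
    then show ?thesis using 2 unfolding Some_in_WX_iff pT_denom_eq_0_iff by blast
  next
    case 3
    then show ?thesis using z closed_finite_part_WX_if_alpha_bounded closure_closed by blast
  qed
qed

lemma interior_params_imp_interior_of_WX:
  assumes re: "Re z \<noteq> 0" and denom: "pT_denom c d z \<noteq> 0" and zero: "pT c d a b z = 0"
    and inside: "ia < ereal a" "ereal a < ib" "b1 < b" "b < b2"
  shows "Some z \<in> riemann_sphere interior_of (WX c d \<Omega>)"
proof -
  have "d \<noteq> 0" using d_pos by simp
  have det: "pT_det c d z \<noteq> 0" by (rule pT_det_nonzero[OF \<open>d \<noteq> 0\<close> re denom zero])
  have params: "pT_alpha c d z = a" "pT_beta c d z = b"
    using pT_zero_params_unique[OF \<open>d \<noteq> 0\<close> re denom pT_alpha_beta_zero[OF det] zero] by auto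
  obtain l1 l2 where l: "ia < ereal l1" "l1 < a" "a < l2" "ereal l2 < ib"
    using ereal_dense2[OF inside(1)] ereal_dense2[OF inside(2)] by auto
  have tendsto: "(f \<longlongrightarrow> f z) (nhds z)" if "isCont f z" for f :: "complex \<Rightarrow> real"
    using that by (simp add: isCont_def tendsto_at_iff_tendsto_nhds)
  have "\<forall>\<^sub>F w in nhds z. pT_det c d w \<noteq> 0 \<and> l1 < pT_alpha c d w \<and> pT_alpha c d w < l2
                          \<and> b1 < pT_beta c d w \<and> pT_beta c d w < b2"
    using tendsto_imp_eventually_ne[OF tendsto[OF isCont_pT_det] det]
      order_tendstoD[OF tendsto[OF isCont_pT_alpha[OF det]]]
      order_tendstoD[OF tendsto[OF isCont_pT_beta[OF det]]]
    unfolding params using l inside by (auto intro!: eventually_conj)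
  then show ?thesis
    unfolding Some_in_interior_of_riemann_sphere_iff
  proof eventually_elim
    case (elim w)
    then have "ereal l1 < ereal (pT_alpha c d w)" "ereal (pT_alpha c d w) < ereal l2" by simp_all
    then have "ia \<le> ereal (pT_alpha c d w)" "ereal (pT_alpha c d w) \<le> ib"
      using l(1,4) by (meson less_imp_le less_trans)+
    then have "(ereal (pT_alpha c d w), pT_beta c d w) \<in> \<Omega>" using elim by auto
    then show "Some w \<in> WX c d \<Omega>"
      unfolding Some_in_WX_iff using pT_alpha_beta_zero elim by blast
  qed
qed

lemma frontier_point_off_imag_axis_in_rect_boundary:
  assumes fr: "Some z \<in> riemann_sphere frontier_of (WX c d \<Omega>)" and re: "Re z \<noteq> 0"
  shows "Some z \<in> WX c d \<Omega>_bd"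
proof (rule ccontr)
  assume not_bd: "Some z \<notin> WX c d \<Omega>_bd"
  have cl: "Some z \<in> riemann_sphere closure_of (WX c d \<Omega>)"
    and not_int: "Some z \<notin> riemann_sphere interior_of (WX c d \<Omega>)"
    using fr unfolding frontier_of_def by auto
  from cl have "Some z \<in> WX c d \<Omega>" by (rule Some_in_WX_if_in_closure_of)
  then obtain a b where ab: "(ereal a, b) \<in> \<Omega>" "pT c d a b z = 0"
    using not_bd infinite_alpha_in_rect_boundary(1) unfolding Some_in_WX_iff by blast
  have denom: "pT_denom c d z \<noteq> 0" using denom_zero_root_in_rect_boundary ab not_bd by blast
  have "(ereal a, b) \<notin> \<Omega>_bd" using not_bd ab(2) unfolding Some_in_WX_iff by blast
  then have "ia < ereal a" "ereal a < ib" "b1 < b" "b < b2"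
    using ab(1) unfolding rect_boundary_eq by (auto simp: order.order_iff_strict)
  then show False using interior_params_imp_interior_of_WX[OF re denom ab(2)] not_int by blast
qed

lemma None_not_in_interior_of_WX: "None \<notin> riemann_sphere interior_of (WX c d \<Omega>)"
proof
  assume "None \<in> riemann_sphere interior_of (WX c d \<Omega>)"
  then obtain R where R: "\<And>w. R < norm w \<Longrightarrow> Some w \<in> WX c d \<Omega>"
    using None_in_interior_of_riemann_sphere by blast
  define n where "n = 1 + \<bar>R\<bar> + norm (delta_plus c d) + norm (delta_minus c d)"
  define t where "t = n + (\<bar>b1\<bar> + c) / d"
  have "(\<bar>b1\<bar> + c) / d \<ge> 0" "n \<ge> 1" using c_nonneg d_pos unfolding n_def by simp_all
  then have t: "t > 0" "R < t" "norm (delta_plus c d) < t" "norm (delta_minus c d) < t"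
    using norm_ge_zero[of "delta_plus c d"] norm_ge_zero[of "delta_minus c d"] abs_ge_self[of R]
    unfolding t_def n_def by linarith+
  have "d * t = d * n + (\<bar>b1\<bar> + c)" unfolding t_def n_def using d_pos by (simp add: field_simps)
  moreover have "d * n > 0" using d_pos \<open>n \<ge> 1\<close> by simp
  ultimately have "\<bar>b1\<bar> + c < d * t" by linarith
  have "t \<le> norm (Complex t t)" using abs_Re_le_cmod[of "Complex t t"] t(1) by simp
  then have "Some (Complex t t) \<in> WX c d \<Omega>" "Complex t t \<noteq> delta_plus c d" "Complex t t \<noteq> delta_minus c d"
    using R t by auto
  then obtain a b where "(ereal a, b) \<in> \<Omega>" "pT c d a b (Complex t t) = 0"
    unfolding Some_in_WX_iff by blast
  moreover from this(1) have "b1 \<le> b" by auto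
  then have "b + c + d * t > 0"
    using \<open>\<bar>b1\<bar> + c < d * t\<close> abs_ge_minus_self[of b1] c_nonneg by linarith
  ultimately show False using pT_diagonal_nonzero c_nonneg d_pos t(1) by blast
qed

text \<open>The zero \<open>z\<close> of the denominator is approached along the circle \<open>pT_det c d w = 0\<close>
  (parametrised by \<open>Im w - Im z\<close>), whose points off the imaginary axis belong to no
  \<open>WX c d X\<close> by \<open>pT_det_zero_not_in_WX\<close>.\<close>

lemma denom_zero_not_in_interior_of_WX:
  assumes re: "Re z \<noteq> 0" and denom: "pT_denom c d z = 0"
  shows "Some z \<notin> riemann_sphere interior_of (WX c d \<Omega>)"
proof
  assume "Some z \<in> riemann_sphere interior_of (WX c d \<Omega>)"
  then have near: "\<forall>\<^sub>F w in nhds z. Some w \<in> WX c d \<Omega>"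
    unfolding Some_in_interior_of_riemann_sphere_iff .
  have iz: "Im z = - d / 2" and rz: "(Re z)\<^sup>2 = c - d\<^sup>2 / 4"
    using pT_denom_eq_0_off_imag_axis[OF denom re] by auto
  define \<rho> where "\<rho> s = (c / d)\<^sup>2 - (s - d / 2 + c / d)\<^sup>2" for s
  define v where "v s = of_real (sgn (Re z) * sqrt (\<rho> s)) + \<i> * of_real (s - d / 2)" for s
  have "\<rho> 0 = (Re z)\<^sup>2" unfolding \<rho>_def rz using d_pos by (simp add: field_simps power2_eq_square)
  then have "v 0 = z" "\<rho> 0 > 0"
    unfolding v_def using re iz by (simp_all add: complex_eq_iff real_sqrt_abs sgn_mult_abs)
  have "isCont v 0" "isCont \<rho> 0" unfolding v_def \<rho>_def by (intro continuous_intros)+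
  then have "(v \<longlongrightarrow> z) (at_right 0)" "(\<rho> \<longlongrightarrow> \<rho> 0) (at_right 0)"
    using \<open>v 0 = z\<close> by (auto simp: isCont_def intro: tendsto_within_subset)
  then have "\<forall>\<^sub>F s in at_right 0. Some (v s) \<in> WX c d \<Omega> \<and> \<rho> s > 0 \<and> s > 0"
    using near \<open>\<rho> 0 > 0\<close>
    by (intro eventually_conj eventually_at_right_less order_tendstoD(1)) (auto simp: filterlim_iff)
  then obtain s where s: "Some (v s) \<in> WX c d \<Omega>" "\<rho> s > 0" "s > 0"
    using eventually_happens'[OF trivial_limit_at_right_real] by blast
  have re_v: "Re (v s) \<noteq> 0" and re2_v: "(Re (v s))\<^sup>2 = \<rho> s" and im_v: "Im (v s) = s - d / 2"
    using s(2) re unfolding v_def by (auto simp: power_mult_distrib sgn_if)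
  have "2 * c * (s - d / 2) + d * (\<rho> s + (s - d / 2)\<^sup>2) = 0"
    unfolding \<rho>_def using d_pos by (simp add: field_simps power2_eq_square)
  then have "pT_det c d (v s) = 0" unfolding pT_det_eq re2_v im_v by simp
  moreover have "pT_denom c d (v s) \<noteq> 0"
    using pT_denom_eq_0_off_imag_axis(1)[OF _ re_v] s(3) unfolding v_def by force
  ultimately show False using pT_det_zero_not_in_WX re_v s(1) d_pos by force
qed

lemma edge_root_perturb_outside:
  assumes nonzero: "\<And>w. w \<in> ball z r \<Longrightarrow> pT_denom c d w \<noteq> 0 \<and> w \<noteq> 0" and "r > 0"
    and edge: "(ereal a, b) \<in> \<Omega>_bd" and zero: "pT c d a b z = 0"
  obtains w a' b' where "w \<in> ball z r" "pT c d a' b' w = 0" "(ereal a', b') \<notin> \<Omega>"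
proof -
  have "ereal a = ib \<or> ereal a = ia \<or> b = b2 \<or> b = b1"
    using edge unfolding rect_boundary_eq by auto
  then show ?thesis
  proof (elim disjE)
    assume "ereal a = ib"
    moreover obtain w t where "w \<in> ball z r" "t > a" "pT c d t b w = 0"
      using pT_zero_perturb_alpha(1)[OF _ \<open>r > 0\<close> zero] nonzero by blast
    ultimately show thesis using that[of w t b] by auto
  next
    assume "ereal a = ia"
    moreover obtain w t where "w \<in> ball z r" "t < a" "pT c d t b w = 0"
      using pT_zero_perturb_alpha(2)[OF _ \<open>r > 0\<close> zero] nonzero by blast
    ultimately show thesis using that[of w t b] by auto
  next
    assume "b = b2"
    moreover obtain w t where "w \<in> ball z r" "t > b" "pT c d a t w = 0"
      using pT_zero_perturb_beta(1)[OF _ \<open>r > 0\<close> zero] nonzero by blast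
    ultimately show thesis using that[of w a t] by auto
  next
    assume "b = b1"
    moreover obtain w t where "w \<in> ball z r" "t < b" "pT c d a t w = 0"
      using pT_zero_perturb_beta(2)[OF _ \<open>r > 0\<close> zero] nonzero by blast
    ultimately show thesis using that[of w a t] by auto
  qed
qed

lemma boundary_params_not_in_interior_of_WX:
  assumes re: "Re z \<noteq> 0" and denom: "pT_denom c d z \<noteq> 0"
    and edge: "(ereal a, b) \<in> \<Omega>_bd" and zero: "pT c d a b z = 0"
  shows "Some z \<notin> riemann_sphere interior_of (WX c d \<Omega>)"
proof
  assume "Some z \<in> riemann_sphere interior_of (WX c d \<Omega>)"
  then have "\<forall>\<^sub>F w in nhds z. Some w \<in> WX c d \<Omega>"
    unfolding Some_in_interior_of_riemann_sphere_iff .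
  moreover have "\<forall>\<^sub>F w in nhds z. pT_denom c d w \<noteq> 0"
    using isCont_pT_denom[where c=c and d=d and w=z] denom
    by (intro tendsto_imp_eventually_ne) (simp_all add: isCont_def tendsto_at_iff_tendsto_nhds)
  moreover have "\<forall>\<^sub>F w in nhds z. Re w \<noteq> 0"
    using tendsto_imp_eventually_ne[OF tendsto_Re[OF filterlim_ident[of "nhds z"]] re] by simp
  ultimately have "\<forall>\<^sub>F w in nhds z. Some w \<in> WX c d \<Omega> \<and> pT_denom c d w \<noteq> 0 \<and> Re w \<noteq> 0"
    by (intro eventually_conj)
  then obtain r where "r > 0"
    and near: "\<And>w. w \<in> ball z r \<Longrightarrow> Some w \<in> WX c d \<Omega> \<and> pT_denom c d w \<noteq> 0 \<and> Re w \<noteq> 0"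
    unfolding eventually_nhds_metric by (metis mem_ball dist_commute)
  have nonzero: "pT_denom c d w \<noteq> 0 \<and> w \<noteq> 0" if "w \<in> ball z r" for w
    using near[OF that] by auto
  obtain w a' b' where w: "w \<in> ball z r" "pT c d a' b' w = 0" "(ereal a', b') \<notin> \<Omega>"
    by (rule edge_root_perturb_outside[OF nonzero \<open>r > 0\<close> edge zero])
  then show False
    using near[OF w(1)] pT_zero_params_outside_not_in_WX[of d w c a' b' "\<Omega>"] d_pos by auto
qed

lemma rect_boundary_point_in_frontier_of_WX:
  assumes bd: "Some z \<in> WX c d \<Omega>_bd" and re: "Re z \<noteq> 0"
  shows "Some z \<in> riemann_sphere frontier_of (WX c d \<Omega>)"
proof -
  have "Some z \<in> WX c d \<Omega>" using bd WX_mono[OF rect_boundary_subset] by blast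
  then have "Some z \<in> riemann_sphere closure_of (WX c d \<Omega>)"
    using closure_of_subset[of "WX c d \<Omega>" riemann_sphere] by auto
  moreover have "Some z \<notin> riemann_sphere interior_of (WX c d \<Omega>)"
  proof (cases "pT_denom c d z = 0")
    case True
    then show ?thesis using denom_zero_not_in_interior_of_WX re by blast
  next
    case False
    then obtain a b where "(ereal a, b) \<in> \<Omega>_bd" "pT c d a b z = 0"
      using bd unfolding Some_in_WX_iff pT_denom_eq_0_iff by blast
    then show ?thesis using boundary_params_not_in_interior_of_WX re False by blast
  qed
  ultimately show ?thesis unfolding frontier_of_def by blast
qed

lemma None_in_frontier_of_WX:
  assumes "None \<in> WX c d \<Omega>_bd"
  shows "None \<in> riemann_sphere frontier_of (WX c d \<Omega>)"
proof -
  have "None \<in> WX c d \<Omega>" using assms WX_mono[OF rect_boundary_subset] by blast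
  then have "None \<in> riemann_sphere closure_of (WX c d \<Omega>)"
    using closure_of_subset[of "WX c d \<Omega>" riemann_sphere] by auto
  then show ?thesis using None_not_in_interior_of_WX unfolding frontier_of_def by blast
qed

theorem WX_imag_axis_and_frontier:
  "WX c d \<Omega> \<inter> imag_axis = WX c d \<Omega>_bd \<inter> imag_axis \<and>
   riemann_sphere frontier_of (WX c d \<Omega>) - imag_axis = WX c d \<Omega>_bd - imag_axis"
proof
  have [simp]: "Some z \<in> imag_axis \<longleftrightarrow> Re z = 0" "None \<notin> imag_axis" for z
    unfolding imag_axis_def by auto
  show "WX c d \<Omega> \<inter> imag_axis = WX c d \<Omega>_bd \<inter> imag_axis"
    using imag_axis_root_in_rect_boundary WX_mono[OF rect_boundary_subset]
    by (auto simp: imag_axis_def)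
  show "riemann_sphere frontier_of (WX c d \<Omega>) - imag_axis = WX c d \<Omega>_bd - imag_axis"
  proof (intro equalityI subsetI)
    fix x assume "x \<in> riemann_sphere frontier_of (WX c d \<Omega>) - imag_axis"
    then show "x \<in> WX c d \<Omega>_bd - imag_axis"
      using None_in_frontier_imp_rect_boundary frontier_point_off_imag_axis_in_rect_boundary
      by (cases x) auto
  next
    fix x assume "x \<in> WX c d \<Omega>_bd - imag_axis"
    then show "x \<in> riemann_sphere frontier_of (WX c d \<Omega>) - imag_axis"
      using None_in_frontier_of_WX rect_boundary_point_in_frontier_of_WX by (cases x) auto
  qed
qed

end

theorem theorem2p9:
  fixes WA WB :: "real set" and c d :: real
  assumes c_nonneg: "c \<ge> 0" and d_pos: "d > 0"
    and WA_ne: "WA \<noteq> {}" and WA_int: "is_interval WA"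
    and WB_ne: "WB \<noteq> {}" and WB_int: "is_interval WB" and WB_bdd: "bounded WB"
    and WB_nz: "WB \<noteq> {0}"
  shows "(WX c d (closure (ereal ` WA) \<times> closure WB) \<inter> imag_axis =
           WX c d (rect_boundary (closure (ereal ` WA)) (closure WB)) \<inter> imag_axis)
    \<and> ((riemann_sphere frontier_of (WX c d (closure (ereal ` WA) \<times> closure WB))) - imag_axis =
           WX c d (rect_boundary (closure (ereal ` WA)) (closure WB)) - imag_axis)"
proof -
  define ia where "ia = Inf (ereal ` WA)"
  define ib where "ib = Sup (ereal ` WA)"
  obtain a where "a \<in> WA" using WA_ne by blast
  then have "ia \<le> ereal a" unfolding ia_def by (rule Inf_lower[OF imageI])
  moreover have "ereal a \<le> ib" unfolding ib_def using \<open>a \<in> WA\<close> by (rule Sup_upper[OF imageI])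
  moreover have "Inf WB \<le> Sup WB"
    using WB_ne WB_bdd by (simp add: bounded_imp_bdd_above bounded_imp_bdd_below cInf_le_cSup)
  ultimately interpret pT_rectangle c d ia ib "Inf WB" "Sup WB"
    using c_nonneg d_pos by unfold_locales auto
  have "ereal ` WA \<noteq> {}" using WA_ne by simp
  then have "closure (ereal ` WA) = {ia..ib}"
    unfolding ia_def ib_def by (rule closure_order_convex[OF _ ereal_image_interval_order_convex[OF WA_int]])
  then show ?thesis
    unfolding closure_bounded_interval[OF WB_int WB_bdd WB_ne] using WX_imag_axis_and_frontier by simp
qed

end
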